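(* Let $p\ge1$ and $q\ge p$. Assume $Q_i(x;\{0\})=0$ for all $x$, and that the numerical flux is consistent, $\mathbb F(U,U)=f(U)$. Suppose there is an ODE solver for the stationary equation $f(U)_x=S(U)H_x$ with the following property. Given any smooth stationary solution $U^*$ and any $\Delta x$, it produces values $U^{*,m}_{\Delta x,i}$ ($m=1,\dots,M$) and $U^{*,i+1/2}_{\Delta x}$ for all $i$ such that $$U^{*,m}_{\Delta x,i}=U^*(x_i^m)+O(\Delta x^q)\quad\text{and}\quad U^{*,i+1/2}_{\Delta x}=U^*(x_{i+1/2})+O(\Delta x^q)$$ uniformly in $i$. Suppose further that, at every cell $i$, the local solver applied with $$\widetilde W=\widetilde U^*_{\Delta x,i}:=\sum_{m=1}^M b_m U^{*,m}_{\Delta x,i}$$ returns exactly - $U^{*,m}_{i,j}=U^{*,m}_{\Delta x,j}$ for $m=1,\dots,M$ and $j\in\mathcal S_i$, - $U_i^{*,i\pm1/2}=U^{*,i\pm1/2}_{\Delta x}$. Assume finally that the quadrature rule satisfies $\sum_m b_m U^*(x_i^m)=\frac1{\Delta x}\int_{I_i}U^*\,dx+O(\Delta x^p)$ uniformly in $i$. Then the numerical method is well-balanced with order $p$: for every such stationary solution $U^*$ and every $\Delta x$, the sequence $\{\widetilde U^*_{\Delta x,i}\}$ is an equilibrium of the semi-discrete system, and $$\frac{1}{\Delta x}\int_{x_{i-1/2}}^{x_{i+1/2}}U^*(x)\,dx=\widetilde U^*_{\Delta x,i}+O(\Delta x^p)\quad\text{for all }i.$$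
   Context: Consider a system of balance laws $U_t+f(U)_x=S(U)H_x(x)$, where $U\in\Omega$, $\Omega\subset\mathbb R^N$ is open and convex, $f,S:\Omega\to\mathbb R^N$, and $H:\mathbb R\to\mathbb R$ is differentiable. A stationary solution is a solution $U^*(x)$ of $f(U)_x=S(U)H_x$. Mesh and quadrature. The cells are $I_i=[x_{i-1/2},x_{i+1/2}]$, all of length $\Delta x$. In each cell there is a quadrature rule with nodes $x_i^m\in I_i$ and weights $b_m$, $m=1,\dots,M$. Each cell $i$ has a stencil $\mathcal S_i$, a finite set of indices containing $i$. Standard reconstruction. $Q_i(x;\{V_j\}_{j\in\mathcal S_i})$ is a standard reconstruction operator of order $p$. Local solver. A local solver, given $i$ and $\widetilde W\in\Omega$, returns values $U^{*,m}_{i,j}$ ($m=1,\dots,M$, $j\in\mathcal S_i$) and $U_i^{*,i\pm1/2}$. Reconstruction. Given cell values $\{\widetilde U_i\}$, at each cell $i$ proceed as follows. - Apply the local solver with $\widetilde W=\widetilde U_i$. - Set $V_j=\widetilde U_j-\sum_m b_m U^{*,m}_{i,j}$ and $Q_i(x)=Q_i(x;\{V_j\})$. - Define - $P_i^m=U^{*,m}_{i,i}+Q_i(x_i^m)$, - $U^+_{i-1/2}=U_i^{*,i-1/2}+Q_i(x_{i-1/2})$, - $U^-_{i+1/2}=U_i^{*,i+1/2}+Q_i(x_{i+1/2})$. Numerical method. The semi-discrete scheme is $$\frac{d\widetilde U_i}{dt}=-\frac{1}{\Delta x}\big(F_{i+1/2}-F_{i-1/2}\big)+\frac1{\Delta x}S_i,$$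 with $F_{i+1/2}=\mathbb F(U^-_{i+1/2},U^+_{i+1/2})$ and $$S_i=f(U_i^{*,i+1/2})-f(U_i^{*,i-1/2})+\Delta x\sum_m b_m\big(S(P_i^m)-S(U^{*,m}_{i,i})\big)H_x(x_i^m).$$ An equilibrium (discrete stationary solution) is a sequence $\{\widetilde U_i\}$ for which the right-hand side vanishes for every $i$. *)

theory Defs
  imports "HOL-Analysis.Analysis"
begin

text \<open>Mesh convention: for mesh size dx, cell I_i = [x_{i-1/2}, x_{i+1/2}] with
  x_{i-1/2} = i*dx and x_{i+1/2} = (i+1)*dx, i an integer.\<close>

definition xface :: "real \<Rightarrow> int \<Rightarrow> real" where
  "xface dx i = (real_of_int i + 1) * dx"

definition smooth_fun :: "(real \<Rightarrow> 'a::real_normed_vector) \<Rightarrow> bool" where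
  "smooth_fun u \<longleftrightarrow> (\<exists>D. D 0 = u \<and>
      (\<forall>k x. (D k has_vector_derivative D (Suc k) x) (at x)))"

definition stationary_sol ::
  "'a set \<Rightarrow> ('a \<Rightarrow> 'a::real_normed_vector) \<Rightarrow> ('a \<Rightarrow> 'a) \<Rightarrow> (real \<Rightarrow> real)
     \<Rightarrow> (real \<Rightarrow> 'a) \<Rightarrow> bool" where
  "stationary_sol \<Omega> f Sf H U \<longleftrightarrow> (\<forall>x. U x \<in> \<Omega>) \<and>
     (\<forall>x. ((\<lambda>y. f (U y)) has_vector_derivative (deriv H x *\<^sub>R Sf (U x))) (at x))"

text \<open>Parameters: f, Sf (source S), H, numerical flux F, reconstruction operator
  Qr dx i V x (= Q_i(x; {V_j}) on the mesh of size dx), stencil St, quadrature nodes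
  nd dx i m (= x_i^m), weights b, number of nodes M, local solver outputs
  lN dx i W m j (= U^{*,m}_{i,j}), lL dx i W (= U_i^{*,i-1/2}), lR dx i W (= U_i^{*,i+1/2}),
  mesh size dx, cell values Ut.  Values V_j outside the stencil are set to 0
  (Qr only uses V_j, j in the stencil).\<close>

definition recV where
  "recV St b M lN dx (Ut :: int \<Rightarrow> 'a::real_vector) i =
     (\<lambda>j. if j \<in> St i then Ut j - (\<Sum>m = 1..M. b m *\<^sub>R lN dx i (Ut i) m j) else 0)"

definition recQ where
  "recQ Qr St b M lN dx Ut i x = Qr dx i (recV St b M lN dx Ut i) x"

definition recP where
  "recP Qr St nd b M lN dx Ut i m =
     lN dx i (Ut i) m i + recQ Qr St b M lN dx Ut i (nd dx i m)"

definition recPlus where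
  "recPlus Qr St b M lN lL dx Ut i =
     lL dx i (Ut i) + recQ Qr St b M lN dx Ut i (xface dx (i - 1))"

definition recMinus where
  "recMinus Qr St b M lN lR dx Ut i =
     lR dx i (Ut i) + recQ Qr St b M lN dx Ut i (xface dx i)"

definition numflux where
  "numflux F Qr St b M lN lL lR dx Ut i =
     F (recMinus Qr St b M lN lR dx Ut i) (recPlus Qr St b M lN lL dx Ut (i + 1))"

definition numsource where
  "numsource f Sf H Qr St nd b M lN lL lR dx Ut i =
     f (lR dx i (Ut i)) - f (lL dx i (Ut i)) +
     dx *\<^sub>R (\<Sum>m = 1..M. (b m * deriv H (nd dx i m)) *\<^sub>R
        (Sf (recP Qr St nd b M lN dx Ut i m) - Sf (lN dx i (Ut i) m i)))"

definition sd_rhs where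
  "sd_rhs f Sf H F Qr St nd b M lN lL lR dx Ut i =
     - (1 / dx) *\<^sub>R (numflux F Qr St b M lN lL lR dx Ut i
                      - numflux F Qr St b M lN lL lR dx Ut (i - 1))
     + (1 / dx) *\<^sub>R numsource f Sf H Qr St nd b M lN lL lR dx Ut i"

definition equilibrium where
  "equilibrium f Sf H F Qr St nd b M lN lL lR dx Ut \<longleftrightarrow>
     (\<forall>i. sd_rhs f Sf H F Qr St nd b M lN lL lR dx Ut i = 0)"

end

theory Submission
  imports Defs
begin

text \<open>Feeding the local solver the cell averages of the ODE solution makes the data of the
  standard reconstruction vanish, so the reconstruction is exactly the solver's stationary
  profile. Its interface values then agree from both sides, consistency reduces every
  numerical flux to the physical flux, and the source term was designed to telescope
  against those fluxes. The order estimate is the quadrature error plus the weighted ODE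
  error, the latter of order q \<ge> p.\<close>

lemma recV_eq_zero:
  fixes Ut :: "int \<Rightarrow> 'a::real_vector" and M :: nat
  assumes "\<And>j. j \<in> St i \<Longrightarrow> (\<Sum>m = 1..M. b m *\<^sub>R lN dx i (Ut i) m j) = Ut j"
  shows "recV St b M lN dx Ut i = (\<lambda>j. 0)"
  using assms by (auto simp: recV_def)

lemma equilibrium_if_fluctuations_vanish:
  fixes Ut :: "int \<Rightarrow> 'a::real_vector" and f Sf :: "'a \<Rightarrow> 'b::real_vector" and M :: nat
  assumes Q0: "\<And>i x. recQ Qr St b M lN dx Ut i x = 0"
    and interfaces: "\<And>i. lL dx (i + 1) (Ut (i + 1)) = lR dx i (Ut i)"
    and consistent: "\<And>i. F (lR dx i (Ut i)) (lR dx i (Ut i)) = f (lR dx i (Ut i))"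
  shows "equilibrium f Sf H F Qr St nd b M lN lL lR dx Ut"
proof -
  have flux: "numflux F Qr St b M lN lL lR dx Ut i = f (lR dx i (Ut i))" for i
    by (simp add: numflux_def recMinus_def recPlus_def Q0 interfaces consistent)
  have source: "numsource f Sf H Qr St nd b M lN lL lR dx Ut i
                  = f (lR dx i (Ut i)) - f (lR dx (i - 1) (Ut (i - 1)))" for i
    using interfaces[of "i - 1"] by (simp add: numsource_def recP_def Q0)
  show ?thesis
    unfolding equilibrium_def sd_rhs_def flux source by (simp add: algebra_simps)
qed

lemma equilibrium_if_solver_reproduces:
  fixes N :: "int \<Rightarrow> nat \<Rightarrow> 'a::real_vector" and f Sf :: "'a \<Rightarrow> 'b::real_vector"
    and b :: "nat \<Rightarrow> real" and M :: nat
  defines "Ut \<equiv> \<lambda>i. \<Sum>m = 1..M. b m *\<^sub>R N i m"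
  assumes Q_zero: "\<And>i x. Qr dx i (\<lambda>j. 0) x = 0"
    and node_values: "\<And>i m j. m \<in> {1..M} \<Longrightarrow> j \<in> St i \<Longrightarrow> lN dx i (Ut i) m j = N j m"
    and face_values: "\<And>i. lL dx i (Ut i) = G (i - 1)" "\<And>i. lR dx i (Ut i) = G i"
    and consistent: "\<And>i. F (G i) (G i) = f (G i)"
  shows "equilibrium f Sf H F Qr St nd b M lN lL lR dx Ut"
proof (rule equilibrium_if_fluctuations_vanish)
  show "recQ Qr St b M lN dx Ut i x = 0" for i x
    unfolding recQ_def using node_values
    by (subst recV_eq_zero) (auto intro: sum.cong simp: Ut_def Q_zero)
qed (simp_all add: face_values consistent)

lemma norm_weighted_sum_le:
  fixes u :: "'i \<Rightarrow> 'a::real_normed_vector"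
  assumes "\<And>m. m \<in> A \<Longrightarrow> norm (u m) \<le> e"
  shows "norm (\<Sum>m\<in>A. c m *\<^sub>R u m) \<le> (\<Sum>m\<in>A. \<bar>c m\<bar>) * e"
proof -
  have "norm (\<Sum>m\<in>A. c m *\<^sub>R u m) \<le> (\<Sum>m\<in>A. \<bar>c m\<bar> * norm (u m))"
    using norm_sum[of "\<lambda>m. c m *\<^sub>R u m" A] by simp
  also have "\<dots> \<le> (\<Sum>m\<in>A. \<bar>c m\<bar> * e)"
    using assms by (intro sum_mono mult_left_mono) auto
  finally show ?thesis by (simp add: sum_distrib_right)
qed

lemma weighted_sum_error_transfer:
  fixes u v :: "'i \<Rightarrow> 'a::real_normed_vector" and h :: real
  assumes quad: "norm ((\<Sum>m\<in>A. c m *\<^sub>R u m) - I) \<le> C1 * h ^ p"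
    and pert: "\<And>m. m \<in> A \<Longrightarrow> norm (v m - u m) \<le> C2 * h ^ q"
    and h: "0 < h" "h \<le> 1" and pq: "p \<le> q"
  shows "norm (I - (\<Sum>m\<in>A. c m *\<^sub>R v m)) \<le> (C1 + (\<Sum>m\<in>A. \<bar>c m\<bar>) * max C2 0) * h ^ p"
proof -
  have "C2 * h ^ q \<le> max C2 0 * h ^ p"
    using h pq power_decreasing[of p q h]
    by (smt (verit) max.cobounded1 max.cobounded2 mult_left_mono mult_right_mono zero_le_power)
  then have "norm (\<Sum>m\<in>A. c m *\<^sub>R (v m - u m)) \<le> (\<Sum>m\<in>A. \<bar>c m\<bar>) * (max C2 0 * h ^ p)"
    using pert by (intro norm_weighted_sum_le) (meson order_trans)
  moreover have "I - (\<Sum>m\<in>A. c m *\<^sub>R v m)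
      = (I - (\<Sum>m\<in>A. c m *\<^sub>R u m)) - (\<Sum>m\<in>A. c m *\<^sub>R (v m - u m))"
    by (simp add: scaleR_diff_right sum_subtractf)
  ultimately show ?thesis
    using quad norm_triangle_ineq4[of "I - (\<Sum>m\<in>A. c m *\<^sub>R u m)"
        "\<Sum>m\<in>A. c m *\<^sub>R (v m - u m)"]
    by (simp add: norm_minus_commute algebra_simps)
qed

theorem theorem2:
  fixes \<Omega> :: "(real ^ 'n) set"
    and f Sf :: "real ^ 'n \<Rightarrow> real ^ 'n"
    and H :: "real \<Rightarrow> real"
    and F :: "real ^ 'n \<Rightarrow> real ^ 'n \<Rightarrow> real ^ 'n"
    and Qr :: "real \<Rightarrow> int \<Rightarrow> (int \<Rightarrow> real ^ 'n) \<Rightarrow> real \<Rightarrow> real ^ 'n"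
    and St :: "int \<Rightarrow> int set"
    and nd :: "real \<Rightarrow> int \<Rightarrow> nat \<Rightarrow> real"
    and b :: "nat \<Rightarrow> real"
    and M p q :: nat
    and lN :: "real \<Rightarrow> int \<Rightarrow> real ^ 'n \<Rightarrow> nat \<Rightarrow> int \<Rightarrow> real ^ 'n"
    and lL lR :: "real \<Rightarrow> int \<Rightarrow> real ^ 'n \<Rightarrow> real ^ 'n"
    and odeN :: "(real \<Rightarrow> real ^ 'n) \<Rightarrow> real \<Rightarrow> int \<Rightarrow> nat \<Rightarrow> real ^ 'n"
    and odeF :: "(real \<Rightarrow> real ^ 'n) \<Rightarrow> real \<Rightarrow> int \<Rightarrow> real ^ 'n"
  assumes Omega: "open \<Omega>" "convex \<Omega>"
    and H_diff: "\<And>x. H differentiable (at x)"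
    and stencil: "\<And>i. finite (St i)" "\<And>i. i \<in> St i"
    and nodes: "\<And>dx i m. dx > 0 \<Longrightarrow> m \<in> {1..M} \<Longrightarrow>
                  nd dx i m \<in> {xface dx (i - 1) .. xface dx i}"
    and p_ge: "p \<ge> 1" and q_ge: "q \<ge> p"
    and Q_zero: "\<And>dx i x. Qr dx i (\<lambda>j. 0) x = 0"
    and flux_consistent: "\<And>u. u \<in> \<Omega> \<Longrightarrow> F u u = f u"
    and ode_in: "\<And>U dx i. smooth_fun U \<Longrightarrow> stationary_sol \<Omega> f Sf H U \<Longrightarrow> dx > 0 \<Longrightarrow>
                   odeF U dx i \<in> \<Omega>"
    and ode_acc: "\<And>U. smooth_fun U \<Longrightarrow> stationary_sol \<Omega> f Sf H U \<Longrightarrow>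
        \<exists>C \<delta>. \<delta> > 0 \<and> (\<forall>dx i. 0 < dx \<and> dx < \<delta> \<longrightarrow>
            (\<forall>m \<in> {1..M}. norm (odeN U dx i m - U (nd dx i m)) \<le> C * dx ^ q) \<and>
            norm (odeF U dx i - U (xface dx i)) \<le> C * dx ^ q)"
    and local_solver: "\<And>U dx i. smooth_fun U \<Longrightarrow> stationary_sol \<Omega> f Sf H U \<Longrightarrow> dx > 0 \<Longrightarrow>
        (let W = (\<Sum>m = 1..M. b m *\<^sub>R odeN U dx i m) in
           (\<forall>m \<in> {1..M}. \<forall>j \<in> St i. lN dx i W m j = odeN U dx j m) \<and>
           lL dx i W = odeF U dx (i - 1) \<and> lR dx i W = odeF U dx i)"
    and quadrature: "\<And>U. smooth_fun U \<Longrightarrow> stationary_sol \<Omega> f Sf H U \<Longrightarrow>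
        \<exists>C \<delta>. \<delta> > 0 \<and> (\<forall>dx i. 0 < dx \<and> dx < \<delta> \<longrightarrow>
            norm ((\<Sum>m = 1..M. b m *\<^sub>R U (nd dx i m))
                  - (1 / dx) *\<^sub>R integral {xface dx (i - 1) .. xface dx i} U) \<le> C * dx ^ p)"
  shows "\<forall>U. smooth_fun U \<and> stationary_sol \<Omega> f Sf H U \<longrightarrow>
           (\<forall>dx > 0. equilibrium f Sf H F Qr St nd b M lN lL lR dx
                        (\<lambda>i. \<Sum>m = 1..M. b m *\<^sub>R odeN U dx i m)) \<and>
           (\<exists>C \<delta>. \<delta> > 0 \<and> (\<forall>dx i. 0 < dx \<and> dx < \<delta> \<longrightarrow>
              norm ((1 / dx) *\<^sub>R integral {xface dx (i - 1) .. xface dx i} U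
                    - (\<Sum>m = 1..M. b m *\<^sub>R odeN U dx i m)) \<le> C * dx ^ p))"
proof (intro allI impI conjI)
  fix U assume "smooth_fun U \<and> stationary_sol \<Omega> f Sf H U"
  then have sm: "smooth_fun U" and st: "stationary_sol \<Omega> f Sf H U" by auto
  show "equilibrium f Sf H F Qr St nd b M lN lL lR dx (\<lambda>i. \<Sum>m = 1..M. b m *\<^sub>R odeN U dx i m)"
    if "dx > 0" for dx
    using local_solver[OF sm st that] flux_consistent ode_in[OF sm st that] Q_zero
    by (intro equilibrium_if_solver_reproduces[where G = "odeF U dx"]) (simp_all add: Let_def)
  obtain C1 d1 where "d1 > 0" and C1: "\<And>dx i. 0 < dx \<Longrightarrow> dx < d1 \<Longrightarrow>
      norm ((\<Sum>m = 1..M. b m *\<^sub>R U (nd dx i m))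
            - (1 / dx) *\<^sub>R integral {xface dx (i - 1) .. xface dx i} U) \<le> C1 * dx ^ p"
    using quadrature[OF sm st] by blast
  obtain C2 d2 where "d2 > 0" and C2: "\<And>dx i m. 0 < dx \<Longrightarrow> dx < d2 \<Longrightarrow> m \<in> {1..M} \<Longrightarrow>
      norm (odeN U dx i m - U (nd dx i m)) \<le> C2 * dx ^ q"
    using ode_acc[OF sm st] by blast
  show "\<exists>C \<delta>. \<delta> > 0 \<and> (\<forall>dx i. 0 < dx \<and> dx < \<delta> \<longrightarrow>
          norm ((1 / dx) *\<^sub>R integral {xface dx (i - 1) .. xface dx i} U
                - (\<Sum>m = 1..M. b m *\<^sub>R odeN U dx i m)) \<le> C * dx ^ p)"
  proof (intro exI conjI allI impI)
    show "min (min d1 d2) 1 > 0" using \<open>d1 > 0\<close> \<open>d2 > 0\<close> by simp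
    fix dx i assume "0 < dx \<and> dx < min (min d1 d2) 1"
    then show "norm ((1 / dx) *\<^sub>R integral {xface dx (i - 1) .. xface dx i} U
                - (\<Sum>m = 1..M. b m *\<^sub>R odeN U dx i m))
          \<le> (C1 + (\<Sum>m = 1..M. \<bar>b m\<bar>) * max C2 0) * dx ^ p"
      using q_ge by (intro weighted_sum_error_transfer[OF C1 C2]) auto
  qed
qed

end
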